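(* Let $U \subset \mathbb{R}^n$ be an open convex set and let $f \colon U \to \mathbb{R}$ be a convex function. Suppose $(x_k)_{k\ge 0}$ is a BFGS sequence for $f$ contained in $U$, and that the level set $\{x \in U : f(x) \le f(x_0)\}$ is bounded. Assume there is an open set $V \subset U$ containing the closure $\mathrm{cl}\,\{x_k : k\ge 0\}$ and satisfying $\inf_{x \in V} f(x) = \min f$, such that for every constant $\delta > 0$ there exist a convex open set $U_\delta \subset U$ containing $\{x \in U : f(x) \le f(x_0)\}$ and a twice continuously differentiable convex function $f_\delta \colon U_\delta \to \mathbb{R}$ with $f_\delta(x) = f(x)$ for all $x \in U_\delta$ satisfying $d_{V^c}(x) > \delta$. Then the sequence of function values $f(x_k)$ converges to $\min f$.
   Context: Here $\min f$ denotes the minimum (infimum) value of $f$ over $U$; $V^c = \mathbb{R}^n \setminus V$, and $d_{V^c}(x) = \inf_{z \in V^c}\|z - x\|$ is the Euclidean distance from $x$ to $V^c$. A sequence $(x_k)$ is a BFGS sequence for $f$ if $f$ is differentiable at each $x_k$ with $\nabla f(x_k) \neq 0$, and there exist parameters $0<\mu<\nu<1$ and a positive definite $n\times n$ matrix $H_0$ such that, with $s_k = x_{k+1}-x_k$, $y_k = \nabla f(x_{k+1}) - \nabla f(x_k)$, $V_k = I - \frac{s_k y_k^T}{s_k^T y_k}$ and $H_{k+1} = V_k H_k V_k^T + \frac{s_k s_k^T}{s_k^T y_k}$, one has for all $k=0,1,2,\dots$: $H_k \nabla f(x_k) \in -\mathbb{R}_+ s_k$, $f(x_{k+1}) \le f(x_k)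 + \mu \nabla f(x_k)^T s_k$, and $\nabla f(x_{k+1})^T s_k \ge \nu \nabla f(x_k)^T s_k$. *)

theory Defs
  imports "HOL-Analysis.Analysis"
begin

definition outer :: "real^'n \<Rightarrow> real^'n \<Rightarrow> real^'n^'n" where
  "outer u v = (\<chi> i j. u $ i * v $ j)"

definition pos_def_mat :: "real^'n^'n \<Rightarrow> bool" where
  "pos_def_mat H \<longleftrightarrow> transpose H = H \<and> (\<forall>v. v \<noteq> 0 \<longrightarrow> v \<bullet> (H *v v) > 0)"

primrec bfgs_H :: "(nat \<Rightarrow> real^'n) \<Rightarrow> (nat \<Rightarrow> real^'n) \<Rightarrow> real^'n^'n \<Rightarrow> nat \<Rightarrow> real^'n^'n" where
  "bfgs_H x g H0 0 = H0"
| "bfgs_H x g H0 (Suc k) =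
     (let s = x (Suc k) - x k; y = g (Suc k) - g k;
          V = mat 1 - (1 / (s \<bullet> y)) *\<^sub>R outer s y
      in V ** bfgs_H x g H0 k ** transpose V + (1 / (s \<bullet> y)) *\<^sub>R outer s s)"

definition bfgs_seq :: "(real^'n \<Rightarrow> real) \<Rightarrow> (nat \<Rightarrow> real^'n) \<Rightarrow> bool" where
  "bfgs_seq f x \<longleftrightarrow>
    (\<exists>g :: nat \<Rightarrow> real^'n. \<exists>\<mu> \<nu> :: real. \<exists>H0 :: real^'n^'n.
       (\<forall>k. (f has_derivative (\<lambda>h. g k \<bullet> h)) (at (x k)) \<and> g k \<noteq> 0) \<and>
       0 < \<mu> \<and> \<mu> < \<nu> \<and> \<nu> < 1 \<and> pos_def_mat H0 \<and>
       (\<forall>k. let s = x (Suc k) - x k in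
            (\<exists>t::real. t \<ge> 0 \<and> bfgs_H x g H0 k *v g k = - (t *\<^sub>R s)) \<and>
            f (x (Suc k)) \<le> f (x k) + \<mu> * (g k \<bullet> s) \<and>
            g (Suc k) \<bullet> s \<ge> \<nu> * (g k \<bullet> s)))"

definition C2_on :: "(real^'n) set \<Rightarrow> (real^'n \<Rightarrow> real) \<Rightarrow> bool" where
  "C2_on S F \<longleftrightarrow>
    (\<exists>D :: real^'n \<Rightarrow> ((real^'n) \<Rightarrow>\<^sub>L real). \<exists>D2 :: real^'n \<Rightarrow> ((real^'n) \<Rightarrow>\<^sub>L ((real^'n) \<Rightarrow>\<^sub>L real)).
       (\<forall>x\<in>S. (F has_derivative blinfun_apply (D x)) (at x)) \<and>
       (\<forall>x\<in>S. (D has_derivative blinfun_apply (D2 x)) (at x)) \<and>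
       continuous_on S D2)"

end

theory Submission
  imports Defs
begin

text \<open>
  Powell's trace-determinant argument. The inverses B_k of the BFGS matrices H_k follow the direct
  BFGS update; with a_k = B_k s_k, q_k = |a_k|^2 / (s_k . a_k), rho_k = (y_k . s_k) / (s_k . a_k) and
  r_k = |y_k|^2 / (y_k . s_k) this gives trace B_(k+1) = trace B_k - q_k + r_k and
  det B_(k+1) = det B_k * rho_k. The search direction together with the Armijo and Wolfe conditions
  gives rho_k * q_k * d_k >= (1 - nu) * mu * |grad f(x_k)|^2, where the decreases
  d_k = f(x_k) - f(x_(k+1)) have bounded partial sums. If r_k is bounded, the trace grows at most
  linearly and bounds det B_k polynomially, whereas a gradient bounded away from 0 would make
  log det B_k grow like k log k. So the gradients become arbitrarily small along the iterates, and
  convexity with a bounded level set turns this into f(x_k) --> inf f.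

  The bound on r_k comes from the C^2 convex functions f_delta: for delta below the distance from
  the closure of the iterates to the complement of V, f_delta coincides with f near every iterate,
  and a C^2 convex function is co-coercive on compact subsets of its domain.
\<close>


section \<open>Rank-one matrices\<close>

lemma outer_mult_vector: "outer u v *v z = (v \<bullet> z) *\<^sub>R u"
  by (simp add: outer_def matrix_vector_mult_def vec_eq_iff inner_vec_def sum_distrib_left mult_ac)

lemma transpose_outer: "transpose (outer u v) = outer v u"
  by (simp add: outer_def transpose_def vec_eq_iff)

lemma trace_outer: "trace (outer u v) = u \<bullet> v"
  by (simp add: trace_def outer_def inner_vec_def)

lemma trace_scaleR: "trace (c *\<^sub>R (A::real^'n^'n)) = c * trace A"
  by (simp add: trace_def sum_distrib_left)

lemma transpose_add: "transpose ((A::'a::semiring_1^'n^'m) + B) = transpose A + transpose B"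
  by (simp add: transpose_def vec_eq_iff)

lemma transpose_diff: "transpose ((A::'a::ring_1^'n^'m) - B) = transpose A - transpose B"
  by (simp add: transpose_def vec_eq_iff)

lemma inner_matrix_vector_transpose: "(x::real^'m) \<bullet> ((A::real^'n^'m) *v y) = (transpose A *v x) \<bullet> y"
  by (simp add: dot_lmul_matrix)

lemma inner_matrix_vector_symmetric:
  "transpose A = A \<Longrightarrow> (x::real^'n) \<bullet> ((A::real^'n^'n) *v y) = (A *v x) \<bullet> y"
  by (metis inner_matrix_vector_transpose)

lemma inner_axis_matrix_vector_axis: "axis i 1 \<bullet> ((A::real^'n^'n) *v axis j 1) = A$i$j"
  by (simp add: matrix_vector_mult_basis inner_axis' column_def)

lemma det_axis_rows_replace_row: "det (\<chi> i. if i = k then w else axis i 1 :: real^'n^'n) = w $ k"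
proof -
  have row: "row i (mat 1 :: real^'n^'n) = axis i 1" for i
    by (simp add: row_def mat_def axis_def vec_eq_iff)
  have "det (\<chi> i. if i = k then (\<Sum>i\<in>UNIV. w$i *s row i (mat 1 :: real^'n^'n))
                    else row i (mat 1 :: real^'n^'n)) = w$k * det (mat 1 :: real^'n^'n)"
    by (rule cramer_lemma_transpose)
  then show ?thesis by (simp only: row basis_expansion det_I mult_1_right)
qed

lemma det_axis_rows_plus_multiple_of_row:
  fixes u w :: "real^'n"
  assumes "j \<notin> T"
  shows "det (\<chi> i. if i = j then w else if i \<in> T then axis i 1 + u$i *s w else axis i 1) = w$j"
  using finite[of T] assms
proof (induction T rule: finite_induct)
  case empty
  then show ?case
    using det_axis_rows_replace_row[of j w] by (simp cong: if_cong)
next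
  case (insert t T)
  define A :: "real^'n^'n" where
    "A = (\<chi> i. if i = j then w else if i \<in> T then axis i 1 + u$i *s w else axis i 1)"
  have "t \<noteq> j" "j \<notin> T" using insert by auto
  have "(\<chi> i. if i = j then w else if i \<in> insert t T then axis i 1 + u$i *s w else axis i 1)
      = (\<chi> k. if k = t then row t A + u$t *s w else row k A)"
    using \<open>t \<noteq> j\<close> insert.hyps by (auto simp: vec_eq_iff A_def row_def)
  also have "det \<dots> = det A"
  proof (rule det_row_span)
    have "w = row j A" by (simp add: A_def row_def)
    then show "u$t *s w \<in> vec.span {row k A |k. k \<noteq> t}"
      using \<open>t \<noteq> j\<close> by (auto intro: vec.span_scale vec.span_base)
  qed
  finally show ?case using insert.IH \<open>j \<notin> T\<close> by (simp add: A_def)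
qed

lemma det_mat1_plus_outer: "det (mat 1 + outer u v :: real^'n^'n) = 1 + v \<bullet> u"
proof -
  have rows: "det (\<chi> i. if i \<in> T then axis i 1 + u$i *s v else axis i 1 :: real^'n^'n)
      = 1 + (\<Sum>i\<in>T. u$i * v$i)" for T
    using finite[of T]
  proof (induction T rule: finite_induct)
    case empty
    have "(\<chi> i. axis i 1 :: real^'n^'n) = mat 1" by (simp add: vec_eq_iff mat_def axis_def)
    then show ?case by simp
  next
    case (insert j T)
    let ?row = "\<lambda>i. if i \<in> T then axis i 1 + u$i *s v else axis i 1 :: real^'n"
    have "(\<chi> i. if i \<in> insert j T then axis i 1 + u$i *s v else axis i 1 :: real^'n^'n)
        = (\<chi> i. if i = j then axis i 1 + u$j *s v else ?row i)"
      by (auto simp: vec_eq_iff)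
    also have "det \<dots> = det (\<chi> i. if i = j then axis i 1 else ?row i)
                       + u$j * det (\<chi> i. if i = j then v else ?row i)"
      by (simp add: det_row_add det_row_mul)
    also have "(\<chi> i. if i = j then axis i 1 else ?row i) = (\<chi> i. ?row i)"
      using insert.hyps by (auto simp: vec_eq_iff)
    also have "det (\<chi> i. if i = j then v else ?row i) = v$j"
      using det_axis_rows_plus_multiple_of_row[of j T v u] insert.hyps by simp
    finally show ?case using insert by simp
  qed
  have "mat 1 + outer u v = (\<chi> i. if i \<in> UNIV then axis i 1 + u$i *s v else axis i 1)"
    by (simp add: vec_eq_iff mat_def axis_def outer_def)
  then show ?thesis using rows[of UNIV] by (simp add: inner_vec_def mult.commute)
qed

section \<open>Positive definite matrices\<close>

lemma pos_def_mat_nonneg: "pos_def_mat H \<Longrightarrow> z \<bullet> (H *v z) \<ge> 0"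
  by (cases "z = 0") (auto simp: pos_def_mat_def intro: less_imp_le)

lemma pos_def_mat_matrix_inv:
  assumes "pos_def_mat H"
  shows "matrix_inv H ** H = mat 1"
proof -
  have "inj ((*v) H)"
  proof (rule injI)
    fix z w assume "H *v z = H *v w"
    then have "(z - w) \<bullet> (H *v (z - w)) = 0" by (simp add: matrix_vector_mult_diff_distrib)
    then show "z = w" using assms unfolding pos_def_mat_def by (metis eq_iff_diff_eq_0 less_irrefl)
  qed
  then have "invertible H" by (simp add: invertible_left_inverse matrix_left_invertible_injective)
  then show ?thesis unfolding invertible_def matrix_inv_def by (rule someI_ex[THEN conjunct2])
qed

lemma matrix_left_inverse_unique:
  fixes H X Y :: "'a::field^'n^'n"
  assumes "X ** H = mat 1" "Y ** H = mat 1"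
  shows "X = Y"
  by (metis assms matrix_left_right_inverse matrix_mul_assoc matrix_mul_lid matrix_mul_rid)

lemma pos_def_mat_left_inverse:
  fixes H B :: "real^'n^'n"
  assumes pd: "pos_def_mat H" and BH: "B ** H = mat 1"
  shows "pos_def_mat B"
  unfolding pos_def_mat_def
proof (intro conjI allI impI)
  have Hsym: "transpose H = H" using pd by (simp add: pos_def_mat_def)
  have HB: "H ** B = mat 1" using BH matrix_left_right_inverse by blast
  then have "transpose B ** H = mat 1"
    by (metis Hsym matrix_transpose_mul transpose_mat)
  then show "transpose B = B" using BH by (rule matrix_left_inverse_unique)
  fix z :: "real^'n" assume "z \<noteq> 0"
  define w where "w = B *v z"
  have Hw: "H *v w = z" by (simp add: w_def matrix_vector_mul_assoc HB)
  then have "w \<noteq> 0" using \<open>z \<noteq> 0\<close> by auto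
  have "z \<bullet> (B *v z) = (H *v w) \<bullet> w" unfolding Hw by (simp add: w_def)
  also have "\<dots> = w \<bullet> (H *v w)" by (simp add: inner_commute)
  finally show "z \<bullet> (B *v z) > 0" using pd \<open>w \<noteq> 0\<close> by (simp add: pos_def_mat_def)
qed

lemma pos_def_mat_trace_pos:
  assumes "pos_def_mat A"
  shows "trace A > 0"
proof -
  have "A$i$i > 0" for i
    using assms[unfolded pos_def_mat_def] inner_axis_matrix_vector_axis[of i A i]
    by (metis axis_eq_0_iff zero_neq_one)
  then show ?thesis unfolding trace_def by (intro sum_pos) auto
qed

lemma pos_def_mat_entry_bound:
  assumes pd: "pos_def_mat A"
  shows "\<bar>A$i$j\<bar> \<le> trace A"
proof -
  have diag: "A$k$k \<ge> 0" for k
    using pos_def_mat_nonneg[OF pd, of "axis k 1"] by (simp add: inner_axis_matrix_vector_axis)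
  have tr: "A$i$i + A$j$j \<le> trace A" if "i \<noteq> j"
  proof -
    have "A$i$i + A$j$j = (\<Sum>k\<in>{i,j}. A$k$k)" using that by simp
    also have "\<dots> \<le> trace A" unfolding trace_def by (rule sum_mono2) (auto intro: diag)
    finally show ?thesis .
  qed
  have "transpose A = A" using pd by (simp add: pos_def_mat_def)
  then have symm: "A$j$i = A$i$j" by (metis transpose_def vec_lambda_beta)
  have quad: "(axis i 1 + c *\<^sub>R axis j 1) \<bullet> (A *v (axis i 1 + c *\<^sub>R axis j 1))
      = A$i$i + c * A$i$j + c * A$j$i + c * c * A$j$j" for c
    by (simp add: matrix_vector_right_distrib matrix_vector_mult_scaleR inner_add_left inner_add_right
        inner_axis_matrix_vector_axis algebra_simps)
  show ?thesis
  proof (cases "i = j")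
    case True
    have "A$i$i \<le> trace A" unfolding trace_def by (rule member_le_sum) (auto intro: diag)
    then show ?thesis using True diag[of i] by simp
  next
    case False
    have "0 \<le> A$i$i + 2 * A$i$j + A$j$j"
      using pos_def_mat_nonneg[OF pd, of "axis i 1 + 1 *\<^sub>R axis j 1"] quad[of 1] symm by simp
    moreover have "0 \<le> A$i$i - 2 * A$i$j + A$j$j"
      using pos_def_mat_nonneg[OF pd, of "axis i 1 + (-1) *\<^sub>R axis j 1"] quad[of "-1"] symm by simp
    ultimately show ?thesis using tr[OF False] by linarith
  qed
qed

lemma pos_def_mat_det_bound:
  fixes A :: "real^'n^'n"
  assumes "pos_def_mat A"
  shows "\<bar>det A\<bar> \<le> real (card {p. p permutes (UNIV::'n set)}) * trace A ^ CARD('n)"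
proof -
  have "\<bar>det A\<bar> \<le> (\<Sum>p | p permutes (UNIV::'n set). \<bar>of_int (sign p) * (\<Prod>i\<in>UNIV. A$i$p i)\<bar>)"
    unfolding det_def by (rule sum_abs)
  also have "\<dots> \<le> (\<Sum>p | p permutes (UNIV::'n set). trace A ^ CARD('n))"
  proof (rule sum_mono)
    fix p :: "'n \<Rightarrow> 'n"
    have "\<bar>of_int (sign p) * (\<Prod>i\<in>UNIV. A$i$p i)\<bar> = (\<Prod>i\<in>UNIV. \<bar>A$i$p i\<bar>)"
      by (simp add: abs_mult abs_prod sign_def)
    also have "\<dots> \<le> (\<Prod>i\<in>(UNIV::'n set). trace A)"
      by (rule prod_mono) (auto intro: pos_def_mat_entry_bound[OF assms])
    finally show "\<bar>of_int (sign p) * (\<Prod>i\<in>UNIV. A$i$p i)\<bar> \<le> trace A ^ CARD('n)" by simp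
  qed
  finally show ?thesis by simp
qed

section \<open>The BFGS update and its inverse\<close>

definition bfgs_update :: "real^'n^'n \<Rightarrow> real^'n \<Rightarrow> real^'n \<Rightarrow> real^'n^'n" where
  "bfgs_update H s y =
     (let V = mat 1 - (1 / (s \<bullet> y)) *\<^sub>R outer s y
      in V ** H ** transpose V + (1 / (s \<bullet> y)) *\<^sub>R outer s s)"

text \<open>The direct BFGS update of the Hessian approximation B = H^-1.\<close>

definition bfgs_dual_update :: "real^'n^'n \<Rightarrow> real^'n \<Rightarrow> real^'n \<Rightarrow> real^'n^'n" where
  "bfgs_dual_update B s y =
     (let a = B *v s in B - (1 / (s \<bullet> a)) *\<^sub>R outer a a + (1 / (y \<bullet> s)) *\<^sub>R outer y y)"

lemma bfgs_H_Suc: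
  "bfgs_H x g H0 (Suc k) = bfgs_update (bfgs_H x g H0 k) (x (Suc k) - x k) (g (Suc k) - g k)"
  by (simp add: bfgs_update_def Let_def)

lemma bfgs_update_mult_vector:
  "bfgs_update H s y *v z =
     (let p = z - ((s \<bullet> z) / (s \<bullet> y)) *\<^sub>R y in H *v p + ((s \<bullet> z - y \<bullet> (H *v p)) / (s \<bullet> y)) *\<^sub>R s)"
  by (simp add: bfgs_update_def Let_def algebra_simps outer_mult_vector transpose_diff transpose_outer
      transpose_scalar matrix_vector_mul_assoc[symmetric] scaleR_matrix_vector_assoc[symmetric]
      diff_divide_distrib)

lemma bfgs_update_quadratic_form:
  "z \<bullet> (bfgs_update H s y *v z) =
     (let p = z - ((s \<bullet> z) / (s \<bullet> y)) *\<^sub>R y in p \<bullet> (H *v p) + (s \<bullet> z)\<^sup>2 / (s \<bullet> y))"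
  by (simp add: bfgs_update_mult_vector Let_def inner_diff_left inner_add_right algebra_simps
      power2_eq_square diff_divide_distrib inner_commute[of z s])

lemma trace_bfgs_dual_update:
  "trace (bfgs_dual_update B s y) = trace B - (B *v s) \<bullet> (B *v s) / (s \<bullet> (B *v s)) + y \<bullet> y / (y \<bullet> s)"
  by (simp add: bfgs_dual_update_def Let_def trace_add trace_sub trace_scaleR trace_outer)

context
  fixes H B :: "real^'n^'n" and s y :: "real^'n"
  assumes pd: "pos_def_mat H" and curvature: "s \<bullet> y > 0"
begin

lemma pos_def_mat_bfgs_update: "pos_def_mat (bfgs_update H s y)"
  unfolding pos_def_mat_def
proof (intro conjI allI impI)
  have "transpose H = H" using pd by (simp add: pos_def_mat_def)
  then show "transpose (bfgs_update H s y) = bfgs_update H s y"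
    by (simp add: bfgs_update_def Let_def transpose_add transpose_scalar transpose_outer
        matrix_transpose_mul matrix_mul_assoc)
  fix z :: "real^'n" assume "z \<noteq> 0"
  define p where "p = z - ((s \<bullet> z) / (s \<bullet> y)) *\<^sub>R y"
  have quad: "z \<bullet> (bfgs_update H s y *v z) = p \<bullet> (H *v p) + (s \<bullet> z)\<^sup>2 / (s \<bullet> y)"
    by (simp add: bfgs_update_quadratic_form p_def Let_def)
  show "z \<bullet> (bfgs_update H s y *v z) > 0"
  proof (cases "s \<bullet> z = 0")
    case True
    then show ?thesis using quad pd \<open>z \<noteq> 0\<close> by (simp add: p_def pos_def_mat_def)
  next
    case False
    then show ?thesis using quad pos_def_mat_nonneg[OF pd, of p] curvature
      by (simp add: add_nonneg_pos)
  qed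
qed

context
  assumes inverse: "B ** H = mat 1"
begin

lemma bfgs_inverse_mult_dual_step: "H *v (B *v s) = s"
  by (simp add: matrix_vector_mul_assoc matrix_left_right_inverse[THEN iffD2, OF inverse])

lemma bfgs_dual_update_curvature: "s \<bullet> (B *v s) > 0"
proof -
  have "s \<noteq> 0" using curvature by auto
  then show ?thesis using pos_def_mat_left_inverse[OF pd inverse] by (simp add: pos_def_mat_def)
qed

lemma bfgs_dual_update_inverse: "bfgs_dual_update B s y ** bfgs_update H s y = mat 1"
proof -
  define a where "a = B *v s"
  have Ha: "H *v a = s" unfolding a_def by (rule bfgs_inverse_mult_dual_step)
  have sa: "s \<bullet> a > 0" unfolding a_def by (rule bfgs_dual_update_curvature)
  have "bfgs_dual_update B s y *v (bfgs_update H s y *v z) = z" for z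
  proof -
    define c where "c = (s \<bullet> z) / (s \<bullet> y)"
    define p where "p = z - c *\<^sub>R y"
    define e where "e = (s \<bullet> z - y \<bullet> (H *v p)) / (s \<bullet> y)"
    define w where "w = H *v p + e *\<^sub>R s"
    have w: "bfgs_update H s y *v z = w"
      by (simp add: bfgs_update_mult_vector Let_def w_def e_def p_def c_def)
    have Bw: "B *v w = p + e *\<^sub>R a"
      by (simp add: w_def a_def matrix_vector_right_distrib matrix_vector_mult_scaleR
          matrix_vector_mul_assoc inverse)
    have "s \<bullet> p = 0" using curvature by (simp add: p_def c_def inner_diff_right)
    moreover have "a \<bullet> (H *v p) = s \<bullet> p"
      using pd inner_matrix_vector_symmetric[of H a p] by (simp add: Ha pos_def_mat_def)
    ultimately have aw: "a \<bullet> w / (s \<bullet> a) = e"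
      using sa by (simp add: w_def inner_add_right inner_commute)
    have yw: "y \<bullet> w / (y \<bullet> s) = c"
      using curvature by (simp add: w_def e_def c_def inner_add_right inner_commute field_simps)
    have "bfgs_dual_update B s y *v w = B *v w - (a \<bullet> w / (s \<bullet> a)) *\<^sub>R a + (y \<bullet> w / (y \<bullet> s)) *\<^sub>R y"
      by (simp add: bfgs_dual_update_def Let_def a_def[symmetric] algebra_simps outer_mult_vector
          scaleR_matrix_vector_assoc[symmetric])
    also have "\<dots> = z" by (simp add: Bw aw yw p_def)
    finally show ?thesis by (simp add: w)
  qed
  then show ?thesis by (simp add: matrix_eq matrix_vector_mul_assoc)
qed

lemma bfgs_dual_update_factorization:
  obtains x1 w1 x2 where "bfgs_dual_update B s y = B ** (mat 1 + outer x1 w1) ** (mat 1 + outer x2 y)"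
    and "(1 + w1 \<bullet> x1) * (1 + y \<bullet> x2) = (y \<bullet> s) / (s \<bullet> (B *v s))"
proof -
  define a where "a = B *v s"
  have sa: "s \<bullet> a > 0" unfolding a_def by (rule bfgs_dual_update_curvature)
  have ys: "y \<bullet> s > 0" using curvature by (simp add: inner_commute)
  define \<theta> where "\<theta> = (y \<bullet> (H *v y)) / (y \<bullet> s)"
  have \<theta>: "\<theta> \<ge> 0" using pos_def_mat_nonneg[OF pd, of y] ys by (simp add: \<theta>_def)
  define c where "c = 1 / (1 + \<theta>)"
  have c: "c * (1 + \<theta>) = 1" using \<theta> by (simp add: c_def)
  define x1 where "x1 = (- 1 / (s \<bullet> a)) *\<^sub>R s"
  define w1 where "w1 = a - c *\<^sub>R y"
  define x2 where "x2 = (1 / (y \<bullet> s)) *\<^sub>R (H *v y)"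
  have "a \<bullet> (H *v y) = y \<bullet> s"
    using pd inner_matrix_vector_symmetric[of H a y] bfgs_inverse_mult_dual_step
    by (simp add: a_def pos_def_mat_def inner_commute)
  then have w1x2: "w1 \<bullet> x2 = c"
    using ys c by (simp add: w1_def x2_def \<theta>_def inner_diff_left diff_divide_distrib algebra_simps)
  have "bfgs_dual_update B s y *v z = (B ** (mat 1 + outer x1 w1) ** (mat 1 + outer x2 y)) *v z" for z
  proof -
    define z2 where "z2 = z + (y \<bullet> z) *\<^sub>R x2"
    have w1z2: "w1 \<bullet> z2 = a \<bullet> z"
      by (simp add: z2_def inner_add_right w1x2) (simp add: w1_def inner_diff_left)
    have "(B ** (mat 1 + outer x1 w1) ** (mat 1 + outer x2 y)) *v z = B *v (z2 + (w1 \<bullet> z2) *\<^sub>R x1)"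
      by (simp add: matrix_vector_mul_assoc[symmetric] matrix_vector_mult_add_rdistrib
          outer_mult_vector z2_def)
    also have "\<dots> = B *v z + ((y \<bullet> z) / (y \<bullet> s)) *\<^sub>R y - ((a \<bullet> z) / (s \<bullet> a)) *\<^sub>R a"
      unfolding w1z2
      by (simp add: z2_def x1_def x2_def matrix_vector_mul_assoc inverse matrix_vector_right_distrib
          matrix_vector_mult_scaleR a_def[symmetric] algebra_simps)
    finally show ?thesis
      by (simp add: bfgs_dual_update_def Let_def a_def[symmetric] algebra_simps outer_mult_vector
          scaleR_matrix_vector_assoc[symmetric])
  qed
  then have "bfgs_dual_update B s y = B ** (mat 1 + outer x1 w1) ** (mat 1 + outer x2 y)"
    by (simp add: matrix_eq)
  moreover have "(1 + w1 \<bullet> x1) * (1 + y \<bullet> x2) = (y \<bullet> s) / (s \<bullet> a)"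
  proof -
    have "1 + w1 \<bullet> x1 = c * (y \<bullet> s) / (s \<bullet> a)"
      using sa by (simp add: w1_def x1_def inner_diff_left inner_diff_right field_simps inner_commute)
    moreover have "1 + y \<bullet> x2 = 1 + \<theta>" by (simp add: x2_def \<theta>_def)
    ultimately have "(1 + w1 \<bullet> x1) * (1 + y \<bullet> x2) = c * (1 + \<theta>) * ((y \<bullet> s) / (s \<bullet> a))" by simp
    then show ?thesis using c by simp
  qed
  ultimately show ?thesis using that a_def by blast
qed

lemma det_bfgs_dual_update: "det (bfgs_dual_update B s y) = det B * ((y \<bullet> s) / (s \<bullet> (B *v s)))"
proof -
  obtain x1 w1 x2 where "bfgs_dual_update B s y = B ** (mat 1 + outer x1 w1) ** (mat 1 + outer x2 y)"
    and "(1 + w1 \<bullet> x1) * (1 + y \<bullet> x2) = (y \<bullet> s) / (s \<bullet> (B *v s))"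
    by (rule bfgs_dual_update_factorization)
  then show ?thesis by (simp add: det_mul det_mat1_plus_outer mult.assoc)
qed

end

end

section \<open>Powell's trace-determinant argument\<close>

lemma sum_ln_le_of_sum_le:
  fixes a :: "nat \<Rightarrow> real"
  assumes "m > 0" and pos: "\<And>j. a j > 0" and sum: "(\<Sum>j<m. a j) \<le> real m * b"
  shows "(\<Sum>j<m. ln (a j)) \<le> real m * ln b"
proof -
  have "(\<Sum>j<m. a j) > 0" using assms by (intro sum_pos) (auto simp: lessThan_empty_iff)
  then have "real m * b > 0" using sum by linarith
  then have b: "b > 0" using \<open>m > 0\<close> by (simp add: zero_less_mult_iff)
  have "ln (a j) \<le> ln b + (a j / b - 1)" for j
    using ln_le_minus_one[of "a j / b"] pos[of j] b by (simp add: ln_div)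
  then have "(\<Sum>j<m. ln (a j)) \<le> (\<Sum>j<m. ln b + (a j / b - 1))" by (rule sum_mono)
  also have "\<dots> = real m * ln b + ((\<Sum>j<m. a j) / b - real m)"
    by (simp add: sum.distrib sum_subtractf sum_divide_distrib)
  also have "\<dots> \<le> real m * ln b" using sum b by (simp add: divide_le_eq mult.commute)
  finally show ?thesis .
qed

lemma nlogn_not_linearly_bounded: "\<exists>m\<ge>1. A + real m * C < (real m - real n) * ln (real m)"
proof -
  define E where "E = 2 * \<bar>A\<bar> + 2 * \<bar>C\<bar> + 1"
  define m where "m = nat \<lceil>exp E\<rceil> + 2 * n + 1"
  have ceil: "real_of_int \<lceil>exp E\<rceil> \<ge> 0" using exp_gt_zero[of E] le_of_int_ceiling[of "exp E"] by linarith
  have "real m \<ge> exp E" unfolding m_def by linarith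
  then have lnm: "ln (real m) \<ge> E"
    by (metis exp_gt_zero ln_exp ln_le_cancel_iff order_less_le_trans)
  have "real m - real n \<ge> real m / 2"
    using ceil unfolding m_def by simp
  then have "real m / 2 * E \<le> (real m - real n) * ln (real m)"
    using lnm by (intro mult_mono) (auto simp: E_def)
  moreover have "A + real m * C < real m / 2 * E"
  proof -
    have m1: "real m \<ge> 1" using ceil by (simp add: m_def)
    then have "\<bar>A\<bar> \<le> real m * \<bar>A\<bar>" by (simp add: mult_le_cancel_right1)
    moreover have "real m * C \<le> real m * \<bar>C\<bar>" by (simp add: mult_left_mono)
    ultimately have "A + real m * C \<le> real m * \<bar>A\<bar> + real m * \<bar>C\<bar>" by linarith
    also have "\<dots> < real m / 2 * E" using m1 by (simp add: E_def algebra_simps)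
    finally show ?thesis .
  qed
  ultimately show ?thesis by (intro exI[of _ m]) (auto simp: m_def)
qed

lemma trace_recursion_bounds:
  fixes q r T :: "nat \<Rightarrow> real"
  assumes T: "\<And>j. T (Suc j) = T j - q j + r j" "\<And>j. T j > 0"
    and q: "\<And>j. q j > 0" and r: "\<And>j. r j \<le> M" and "m \<ge> 1"
  shows "(\<Sum>j<m. q j) \<le> real m * (T 0 + \<bar>M\<bar>)" and "T m \<le> real m * (T 0 + \<bar>M\<bar>)"
proof -
  have T_sum: "T m = T 0 - (\<Sum>j<m. q j) + (\<Sum>j<m. r j)"
    by (induction m) (simp_all add: T(1))
  have "(\<Sum>j<m. r j) \<le> real m * M"
    using sum_mono[of "{..<m}" r "\<lambda>_. M"] r by simp
  moreover have "real m * M \<le> real m * \<bar>M\<bar>" by (simp add: mult_left_mono)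
  moreover have "T 0 \<le> real m * T 0" using \<open>m \<ge> 1\<close> T(2)[of 0] by simp
  moreover have "(\<Sum>j<m. q j) \<ge> 0" using q by (simp add: sum_nonneg less_imp_le)
  ultimately show "(\<Sum>j<m. q j) \<le> real m * (T 0 + \<bar>M\<bar>)" "T m \<le> real m * (T 0 + \<bar>M\<bar>)"
    using T_sum T(2)[of m] by (simp_all add: algebra_simps)
qed

lemma ln_abs_product_recursion:
  fixes \<Delta> \<rho> :: "nat \<Rightarrow> real"
  assumes \<Delta>: "\<And>j. \<Delta> (Suc j) = \<Delta> j * \<rho> j" "\<Delta> 0 \<noteq> 0" and \<rho>: "\<And>j. \<rho> j > 0"
  shows "\<Delta> m \<noteq> 0" and "ln \<bar>\<Delta> m\<bar> = ln \<bar>\<Delta> 0\<bar> + (\<Sum>j<m. ln (\<rho> j))"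
proof -
  show nonzero: "\<Delta> m \<noteq> 0" for m
    by (induction m) (use \<Delta> \<rho> in \<open>auto simp: less_imp_neq[symmetric]\<close>)
  show "ln \<bar>\<Delta> m\<bar> = ln \<bar>\<Delta> 0\<bar> + (\<Sum>j<m. ln (\<rho> j))"
  proof (induction m)
    case (Suc m)
    then show ?case using nonzero[of m] \<rho>[of m] by (simp add: \<Delta>(1) abs_mult ln_mult)
  qed simp
qed

text \<open>
  Powell's argument in abstract form: T_j plays trace B_j, Delta_j plays det B_j. The trace
  controls the determinant, while rho_j >= c / (q_j d_j) with sum q_j = O(m) and sum d_j bounded
  forces log |Delta_m| to grow like m log m.
\<close>

lemma powell_potential_contradiction:
  fixes q d \<rho> T r \<Delta> :: "nat \<Rightarrow> real" and n :: nat
  assumes q: "\<And>j. q j > 0" and d: "\<And>j. d j > 0" and \<rho>: "\<And>j. \<rho> j > 0"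
    and c: "c > 0" "\<And>j. c \<le> \<rho> j * q j * d j"
    and T: "\<And>j. T (Suc j) = T j - q j + r j" "\<And>j. T j > 0" and r: "\<And>j. r j \<le> M"
    and \<Delta>: "\<And>j. \<Delta> (Suc j) = \<Delta> j * \<rho> j" "\<Delta> 0 \<noteq> 0" "\<And>j. \<bar>\<Delta> j\<bar> \<le> N * T j ^ n"
    and d_sum: "\<And>m. (\<Sum>j<m. d j) \<le> D"
  shows False
proof -
  define TM where "TM = T 0 + \<bar>M\<bar>"
  define D' where "D' = max D 1"
  have "T 0 > 0" "N * T 0 ^ n > 0" using T(2) \<Delta>(2) \<Delta>(3)[of 0] by (auto intro: order.strict_trans2)
  then have TM: "TM > 0" and N: "N > 0" by (auto simp: TM_def zero_less_mult_iff)
  note trace_bounds = trace_recursion_bounds[of T q r M, OF T q r, folded TM_def]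
  note log_det = ln_abs_product_recursion[of \<Delta> \<rho>, OF \<Delta>(1,2) \<rho>]
  have "(real m - real n) * ln (real m)
        \<le> (ln N + real n * ln TM - ln \<bar>\<Delta> 0\<bar>) + real m * (ln TM + ln D' - ln c)" if "m \<ge> 1" for m
  proof -
    have m: "real m > 0" using that by simp
    have "ln c - ln (q j) - ln (d j) \<le> ln (\<rho> j)" for j
      using ln_le_cancel_iff[of c "\<rho> j * q j * d j"] c \<rho>[of j] q[of j] d[of j] by (simp add: ln_mult)
    then have "(\<Sum>j<m. ln c - ln (q j) - ln (d j)) \<le> (\<Sum>j<m. ln (\<rho> j))" by (rule sum_mono)
    moreover have "(\<Sum>j<m. ln c - ln (q j) - ln (d j))
        = real m * ln c - (\<Sum>j<m. ln (q j)) - (\<Sum>j<m. ln (d j))"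
      by (simp add: sum_subtractf)
    ultimately have "real m * ln c - (\<Sum>j<m. ln (q j)) - (\<Sum>j<m. ln (d j)) \<le> ln \<bar>\<Delta> m\<bar> - ln \<bar>\<Delta> 0\<bar>"
      using log_det(2)[of m] by linarith
    moreover have "ln \<bar>\<Delta> m\<bar> \<le> ln (N * (real m * TM) ^ n)"
    proof -
      have "T m ^ n \<le> (real m * TM) ^ n"
        using trace_bounds(2)[OF that] T(2)[of m] by (intro power_mono) auto
      then have "\<bar>\<Delta> m\<bar> \<le> N * (real m * TM) ^ n"
        using \<Delta>(3)[of m] N by (meson less_imp_le mult_left_mono order_trans)
      then show ?thesis using log_det(1)[of m] by simp
    qed
    moreover have "ln (N * (real m * TM) ^ n) = ln N + real n * ln TM + real n * ln (real m)"
      using N TM m by (simp add: ln_mult ln_realpow algebra_simps)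
    moreover have "(\<Sum>j<m. ln (q j)) \<le> real m * ln TM"
      using sum_ln_le_of_sum_le[of m q TM] m q trace_bounds(1)[OF that] by simp
    moreover have "(\<Sum>j<m. ln (d j)) \<le> real m * (ln D' - ln (real m))"
    proof -
      have "(\<Sum>j<m. d j) \<le> real m * (D' / real m)" using d_sum[of m] m by (simp add: D'_def)
      then have "(\<Sum>j<m. ln (d j)) \<le> real m * ln (D' / real m)"
        using sum_ln_le_of_sum_le[of m d] m d by simp
      moreover have "D' > 0" by (simp add: D'_def)
      ultimately show ?thesis using m by (simp add: ln_div)
    qed
    ultimately show ?thesis unfolding left_diff_distrib right_diff_distrib distrib_left by linarith
  qed
  then show False
    using nlogn_not_linearly_bounded[of "ln N + real n * ln TM - ln \<bar>\<Delta> 0\<bar>" "ln TM + ln D' - ln c" n]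
    by (meson not_le)
qed

section \<open>Convex functions with Lipschitz gradient\<close>

lemma has_real_derivative_along_line:
  assumes "(F has_derivative F') (at (z + t *\<^sub>R h))"
  shows "((\<lambda>t. F (z + t *\<^sub>R h)) has_real_derivative F' h) (at t)"
proof -
  have "((\<lambda>t. z + t *\<^sub>R h) has_derivative (\<lambda>t. t *\<^sub>R h)) (at t)"
    by (auto intro!: derivative_eq_intros)
  from has_derivative_compose[OF this assms]
  have "((\<lambda>t. F (z + t *\<^sub>R h)) has_derivative (\<lambda>t. F' (t *\<^sub>R h))) (at t)" .
  moreover have "(\<lambda>t. F' (t *\<^sub>R h)) = (\<lambda>t. t * F' h)"
    using has_derivative_linear[OF assms] by (simp add: linear_cmul)
  ultimately show ?thesis by (simp add: has_field_derivative_def mult_commute_abs)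
qed

lemma convex_on_above_tangent:
  fixes F :: "'a::real_normed_vector \<Rightarrow> real"
  assumes cvx: "convex_on S F" and p: "p \<in> S" and w: "w \<in> S"
    and der: "(F has_derivative F') (at p)"
  shows "F p + F' (w - p) \<le> F w"
proof -
  define h where "h = w - p"
  have "((\<lambda>t. F (p + t *\<^sub>R h)) has_real_derivative F' h) (at 0 within {0<..})"
    using has_real_derivative_along_line[of F F' p 0 h] der by (simp add: has_field_derivative_at_within)
  then have lim: "((\<lambda>t. (F (p + t *\<^sub>R h) - F p) / t) \<longlongrightarrow> F' h) (at_right 0)"
    by (simp add: has_field_derivative_iff)
  have "eventually (\<lambda>t. (F (p + t *\<^sub>R h) - F p) / t \<le> F w - F p) (at_right 0)"
    using eventually_at_right_real[of 0 1]
  proof (rule eventually_mono)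
    fix t :: real assume t: "t \<in> {0<..<1}"
    have "p + t *\<^sub>R h = (1 - t) *\<^sub>R p + t *\<^sub>R w" by (simp add: h_def algebra_simps)
    then have "F (p + t *\<^sub>R h) \<le> (1 - t) * F p + t * F w"
      using convex_onD[OF cvx, of t p w] t p w by simp
    then have "F (p + t *\<^sub>R h) - F p \<le> t * (F w - F p)" by (simp add: algebra_simps)
    then show "(F (p + t *\<^sub>R h) - F p) / t \<le> F w - F p"
      using t by (simp add: divide_le_eq mult.commute)
  qed simp
  then have "F' h \<le> F w - F p" by (rule tendsto_upperbound[OF lim]) simp
  then show ?thesis by (simp add: h_def)
qed

lemma lipschitz_gradient_upper_bound:
  fixes F :: "'a::real_normed_vector \<Rightarrow> real"
  assumes S: "convex S" and der: "\<And>p. p \<in> S \<Longrightarrow> (F has_derivative blinfun_apply (DF p)) (at p)"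
    and lip: "\<And>p q. p \<in> S \<Longrightarrow> q \<in> S \<Longrightarrow> norm (DF p - DF q) \<le> L * norm (p - q)"
    and z: "z \<in> S" and zh: "z + h \<in> S"
  shows "F (z + h) \<le> F z + DF z h + L / 2 * (norm h)\<^sup>2"
proof -
  define \<phi> where "\<phi> t = F (z + t *\<^sub>R h) - t * DF z h - L / 2 * t\<^sup>2 * (norm h)\<^sup>2" for t
  have inS: "z + t *\<^sub>R h \<in> S" if "0 \<le> t" "t \<le> 1" for t
    using convexD[OF S z zh, of "1 - t" t] that by (simp add: algebra_simps)
  have "\<phi> 1 \<le> \<phi> 0"
  proof (rule DERIV_nonpos_imp_nonincreasing[of 0 1 \<phi>])
    fix t :: real assume t: "0 \<le> t" "t \<le> 1"
    have "(\<phi> has_real_derivative (DF (z + t *\<^sub>R h) h - DF z h - L / 2 * (2 * t) * (norm h)\<^sup>2)) (at t)"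
      unfolding \<phi>_def
      by (rule has_real_derivative_along_line der[OF inS[OF t]] derivative_eq_intros refl | simp)+
    moreover have "DF (z + t *\<^sub>R h) h - DF z h \<le> L / 2 * (2 * t) * (norm h)\<^sup>2"
    proof -
      have "DF (z + t *\<^sub>R h) h - DF z h \<le> norm (DF (z + t *\<^sub>R h) - DF z) * norm h"
        using norm_blinfun[of "DF (z + t *\<^sub>R h) - DF z" h] by (simp add: blinfun.diff_left)
      also have "\<dots> \<le> (L * norm (t *\<^sub>R h)) * norm h"
        using lip[OF inS[OF t] z] by (intro mult_right_mono) auto
      also have "\<dots> = L / 2 * (2 * t) * (norm h)\<^sup>2" using t by (simp add: power2_eq_square)
      finally show ?thesis .
    qed
    ultimately show "\<exists>y. (\<phi> has_real_derivative y) (at t) \<and> y \<le> 0" by force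
  qed simp
  then show ?thesis by (simp add: \<phi>_def)
qed

context
  fixes F :: "'a::real_inner \<Rightarrow> real" and DF :: "'a \<Rightarrow> 'a \<Rightarrow>\<^sub>L real"
    and S K :: "'a set" and L r R :: real
  assumes S: "convex S" and F: "convex_on S F"
    and der: "\<And>p. p \<in> S \<Longrightarrow> (F has_derivative blinfun_apply (DF p)) (at p)"
    and lip: "\<And>p q. p \<in> S \<Longrightarrow> q \<in> S \<Longrightarrow> norm (DF p - DF q) \<le> L * norm (p - q)" and L: "L > 0"
    and margin: "\<And>k e. k \<in> K \<Longrightarrow> norm e \<le> r \<Longrightarrow> k + e \<in> S" and r: "r > 0"
    and diam: "\<And>a b. a \<in> K \<Longrightarrow> b \<in> K \<Longrightarrow> norm (a - b) \<le> R"
begin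

text \<open>
  The classical bound F a + DF a (b - a) + |u|^2 / (2 L) <= F b takes a gradient step from b, which
  must stay in S; paying for the margin r turns L into L + L R / r.
\<close>

lemma convex_lipschitz_gradient_gap:
  assumes a: "a \<in> K" and b: "b \<in> K" and u: "\<And>h. DF b h - DF a h = u \<bullet> h"
  shows "F a + DF a (b - a) + (norm u)\<^sup>2 / (2 * (L + L * R / r)) \<le> F b"
proof -
  define L' where "L' = L + L * R / r"
  have "R \<ge> 0" using diam[OF a a] by simp
  then have "L * R / r \<ge> 0" using L r by simp
  moreover have "r * L' = r * L + L * R" using r by (simp add: L'_def field_simps)
  ultimately have L': "L' > 0" "L \<le> L'" "L * R \<le> r * L'" using L r by (auto simp: L'_def)
  have inS: "k \<in> S" if "k \<in> K" for k using margin[OF that, of 0] r by simp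
  have "(norm u)\<^sup>2 = (DF b - DF a) u" by (simp add: u blinfun.diff_left power2_norm_eq_inner)
  also have "\<dots> \<le> norm (DF b - DF a) * norm u" using norm_blinfun[of "DF b - DF a" u] by simp
  also have "\<dots> \<le> (L * norm (b - a)) * norm u" by (intro mult_right_mono lip inS a b) auto
  finally have "norm u \<le> L * norm (b - a)"
    using L by (cases "norm u = 0") (auto simp: power2_eq_square mult_le_cancel_right)
  then have "norm u \<le> L * R" using diam[OF b a] L by (meson mult_left_mono less_imp_le order_trans)
  define h where "h = - (1 / L') *\<^sub>R u"
  have "norm h \<le> r" using \<open>norm u \<le> L * R\<close> L' by (simp add: h_def divide_le_eq mult.commute)
  then have bh: "b + h \<in> S" by (rule margin[OF b])
  have tang: "F a + DF a ((b + h) - a) \<le> F (b + h)"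
    using convex_on_above_tangent[OF F inS[OF a] bh der[OF inS[OF a]]] .
  have desc: "F (b + h) \<le> F b + DF b h + L / 2 * (norm h)\<^sup>2"
    using lipschitz_gradient_upper_bound[OF S der lip inS[OF b] bh] by blast
  have "DF a ((b + h) - a) = DF a (b - a) + DF a h"
    by (simp add: blinfun.add_right[symmetric] algebra_simps)
  moreover have "DF b h - DF a h = - ((norm u)\<^sup>2 / L')"
    by (simp add: u h_def power2_norm_eq_inner)
  moreover have "L / 2 * (norm h)\<^sup>2 \<le> (norm u)\<^sup>2 / (2 * L')"
  proof -
    have "L / 2 * (norm h)\<^sup>2 = L * (norm u)\<^sup>2 / (2 * L' * L')"
      using L' by (simp add: h_def power2_eq_square field_simps)
    also have "\<dots> \<le> L' * (norm u)\<^sup>2 / (2 * L' * L')"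
      using L' by (intro divide_right_mono mult_right_mono) auto
    also have "\<dots> = (norm u)\<^sup>2 / (2 * L')" using L' by (simp add: field_simps power2_eq_square)
    finally show ?thesis .
  qed
  ultimately show ?thesis using tang desc by (simp add: L'_def[symmetric] field_simps)
qed

lemma convex_lipschitz_gradient_cocoercive:
  assumes p: "p \<in> K" and q: "q \<in> K" and v: "\<And>h. DF q h - DF p h = v \<bullet> h"
  shows "(norm v)\<^sup>2 \<le> (L + L * R / r) * (v \<bullet> (q - p))"
proof -
  define L' where "L' = L + L * R / r"
  have "L' > 0" using diam[OF p p] L r by (simp add: L'_def add_pos_nonneg)
  have "F p + DF p (q - p) + (norm v)\<^sup>2 / (2 * L') \<le> F q"
    unfolding L'_def by (rule convex_lipschitz_gradient_gap[OF p q v])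
  moreover have "F q + DF q (p - q) + (norm v)\<^sup>2 / (2 * L') \<le> F p"
    using convex_lipschitz_gradient_gap[OF q p, of "- v"] v by (simp add: L'_def algebra_simps)
  moreover have "DF p (q - p) + DF q (p - q) = - (v \<bullet> (q - p))"
    using v[of "q - p"] by (simp add: blinfun.diff_right blinfun.minus_right algebra_simps)
  ultimately have "(norm v)\<^sup>2 / L' \<le> v \<bullet> (q - p)" by (simp add: field_simps)
  then show ?thesis using \<open>L' > 0\<close> by (simp add: L'_def[symmetric] divide_le_eq mult.commute)
qed

end

lemma compact_subset_open_infdist_gt:
  fixes A V :: "'a::metric_space set"
  assumes "compact A" "open V" "A \<subseteq> V"
  obtains \<delta> where "\<delta> > 0" "\<And>a. a \<in> A \<Longrightarrow> - V = {} \<or> \<delta> < infdist a (- V)"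
proof -
  obtain e where e: "e > 0" "(\<Union>a\<in>A. cball a e) \<subseteq> V"
    using compact_subset_open_imp_cball_epsilon_subset[OF assms] by blast
  have "e \<le> infdist a (- V)" if "a \<in> A" "- V \<noteq> {}" for a
    unfolding infdist_notempty[OF that(2)]
    by (rule cINF_greatest[OF that(2)]) (use e that(1) in \<open>force simp: not_le\<close>)
  then show ?thesis using e by (intro that[of "e / 2"]) force+
qed

lemma derivative_lipschitz_on_compact_convex:
  fixes D :: "'a::euclidean_space \<Rightarrow> 'a \<Rightarrow>\<^sub>L 'b::real_normed_vector"
  assumes S: "convex S" "compact S"
    and D2: "\<And>z. z \<in> S \<Longrightarrow> (D has_derivative blinfun_apply (D2 z)) (at z)" "continuous_on S D2"
  obtains L where "L > 0" "\<And>p q. p \<in> S \<Longrightarrow> q \<in> S \<Longrightarrow> norm (D p - D q) \<le> L * norm (p - q)"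
proof -
  obtain B where B: "\<And>z. z \<in> S \<Longrightarrow> norm (D2 z) \<le> B"
    using compact_imp_bounded[OF compact_continuous_image[OF D2(2) S(2)]]
    unfolding bounded_iff by blast
  show ?thesis
  proof (rule that[of "max B 1"])
    fix p q assume pq: "p \<in> S" "q \<in> S"
    show "norm (D p - D q) \<le> max B 1 * norm (p - q)"
    proof (rule differentiable_bound[OF S(1) _ _ pq])
      fix z assume "z \<in> S"
      then show "(D has_derivative blinfun_apply (D2 z)) (at z within S)"
        by (rule has_derivative_at_withinI[OF D2(1)])
      show "onorm (blinfun_apply (D2 z)) \<le> max B 1"
        using B[OF \<open>z \<in> S\<close>] by (simp add: norm_blinfun.rep_eq[symmetric])
    qed
  qed simp
qed

lemma compact_convex_thickening:
  fixes K :: "'a::euclidean_space set"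
  assumes K: "compact K" "convex K" and W: "open W" "K \<subseteq> W"
  obtains r S where "r > 0" "convex S" "compact S" "S \<subseteq> W"
    "\<And>k e. k \<in> K \<Longrightarrow> norm e \<le> r \<Longrightarrow> k + e \<in> S"
proof -
  obtain r where r: "r > 0" "(\<Union>k\<in>K. cball k r) \<subseteq> W"
    using compact_subset_open_imp_cball_epsilon_subset[OF K(1) W] by blast
  define S where "S = {k + e |k e. k \<in> K \<and> e \<in> cball 0 r}"
  have "(\<Union>k\<in>K. \<Union>e\<in>cball 0 r. {k + e}) = S" unfolding S_def by blast
  then have "convex S" using convex_sums[OF K(2) convex_cball] by metis
  moreover have "compact S" unfolding S_def by (rule compact_sums[OF K(1) compact_cball])
  moreover have "S \<subseteq> W"
  proof
    fix z assume "z \<in> S"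
    then obtain k e where "z = k + e" "k \<in> K" "norm e \<le> r" by (auto simp: S_def)
    then have "z \<in> cball k r" by (simp add: dist_norm)
    then show "z \<in> W" using r(2) \<open>k \<in> K\<close> by blast
  qed
  moreover have "k + e \<in> S" if "k \<in> K" "norm e \<le> r" for k e using that by (auto simp: S_def)
  ultimately show ?thesis using that[OF r(1)] by blast
qed

lemma C2_convex_cocoercive_on_compact:
  fixes F :: "real^'n \<Rightarrow> real"
  assumes W: "open W" "convex W" and F: "C2_on W F" "convex_on W F"
    and A: "compact A" "A \<subseteq> W"
  obtains M where "\<And>p q gp gq. p \<in> A \<Longrightarrow> q \<in> A \<Longrightarrow> (F has_derivative (\<lambda>h. gp \<bullet> h)) (at p) \<Longrightarrow>
      (F has_derivative (\<lambda>h. gq \<bullet> h)) (at q) \<Longrightarrow> (norm (gq - gp))\<^sup>2 \<le> M * ((gq - gp) \<bullet> (q - p))"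
proof -
  obtain D D2 where D: "\<And>z. z \<in> W \<Longrightarrow> (F has_derivative blinfun_apply (D z)) (at z)"
    and D2: "\<And>z. z \<in> W \<Longrightarrow> (D has_derivative blinfun_apply (D2 z)) (at z)" "continuous_on W D2"
    using F(1) unfolding C2_on_def by blast
  define K where "K = convex hull A"
  have K: "compact K" "convex K" "A \<subseteq> K" "K \<subseteq> W"
    using A W(2) by (auto simp: K_def compact_convex_hull hull_subset hull_minimal)
  obtain r S where r: "r > 0" and S: "convex S" "compact S" "S \<subseteq> W"
    and margin: "\<And>k e. k \<in> K \<Longrightarrow> norm e \<le> r \<Longrightarrow> k + e \<in> S"
    using compact_convex_thickening[OF K(1,2) W(1) K(4)] by blast
  have DS: "\<And>z. z \<in> S \<Longrightarrow> (F has_derivative blinfun_apply (D z)) (at z)"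
    using D S(3) by blast
  have "\<And>z. z \<in> S \<Longrightarrow> (D has_derivative blinfun_apply (D2 z)) (at z)"
    using D2(1) S(3) by blast
  moreover have "continuous_on S D2" using D2(2) S(3) by (rule continuous_on_subset)
  ultimately obtain L where L: "L > 0" "\<And>p q. p \<in> S \<Longrightarrow> q \<in> S \<Longrightarrow> norm (D p - D q) \<le> L * norm (p - q)"
    using derivative_lipschitz_on_compact_convex[OF S(1,2)] by blast
  obtain R0 where R0: "\<And>z. z \<in> K \<Longrightarrow> norm z \<le> R0"
    using compact_imp_bounded[OF K(1)] unfolding bounded_iff by blast
  have R: "norm (a - b) \<le> 2 * R0" if "a \<in> K" "b \<in> K" for a b
    using norm_triangle_ineq4[of a b] R0[OF that(1)] R0[OF that(2)] by linarith
  note cocoercive = convex_lipschitz_gradient_cocoercive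
    [OF S(1) convex_on_subset[OF F(2) S(3,1)] DS L(2,1) margin r R]
  show ?thesis
  proof (rule that)
    fix p q gp gq
    assume p: "p \<in> A" and q: "q \<in> A"
      and gp: "(F has_derivative (\<lambda>h. gp \<bullet> h)) (at p)" and gq: "(F has_derivative (\<lambda>h. gq \<bullet> h)) (at q)"
    have "blinfun_apply (D p) = (\<lambda>h. gp \<bullet> h)" "blinfun_apply (D q) = (\<lambda>h. gq \<bullet> h)"
      using p q K A by (auto intro: has_derivative_unique[OF D] gp gq)
    then have "D q h - D p h = (gq - gp) \<bullet> h" for h by (simp add: inner_diff_left)
    then show "(norm (gq - gp))\<^sup>2 \<le> (L + L * (2 * R0) / r) * ((gq - gp) \<bullet> (q - p))"
      using cocoercive p q K(3) by blast
  qed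
qed

section \<open>BFGS iterations\<close>

lemma convex_on_gap_le_gradient:
  fixes F :: "'a::real_inner \<Rightarrow> real"
  assumes "convex_on U F" "p \<in> U" "z \<in> U" "(F has_derivative (\<lambda>h. v \<bullet> h)) (at p)"
  shows "F p - F z \<le> norm v * norm (z - p)"
proof -
  have "F p + v \<bullet> (z - p) \<le> F z" using convex_on_above_tangent[OF assms] by simp
  then show ?thesis using Cauchy_Schwarz_ineq2[of v "z - p"] by linarith
qed

primrec bfgs_B :: "(nat \<Rightarrow> real^'n) \<Rightarrow> (nat \<Rightarrow> real^'n) \<Rightarrow> real^'n^'n \<Rightarrow> nat \<Rightarrow> real^'n^'n" where
  "bfgs_B x g B0 0 = B0"
| "bfgs_B x g B0 (Suc k) = bfgs_dual_update (bfgs_B x g B0 k) (x (Suc k) - x k) (g (Suc k) - g k)"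

locale bfgs_iteration =
  fixes f :: "real^'n \<Rightarrow> real" and x g :: "nat \<Rightarrow> real^'n" and \<mu> \<nu> :: real and H0 :: "real^'n^'n"
  assumes gradient: "\<And>k. (f has_derivative (\<lambda>h. g k \<bullet> h)) (at (x k))"
    and gradient_nonzero: "\<And>k. g k \<noteq> 0"
    and parameters: "0 < \<mu>" "\<mu> < \<nu>" "\<nu> < 1"
    and pos_def_H0: "pos_def_mat H0"
    and search_direction: "\<And>k. \<exists>t\<ge>0. bfgs_H x g H0 k *v g k = - (t *\<^sub>R (x (Suc k) - x k))"
    and armijo: "\<And>k. f (x (Suc k)) \<le> f (x k) + \<mu> * (g k \<bullet> (x (Suc k) - x k))"
    and wolfe: "\<And>k. \<nu> * (g k \<bullet> (x (Suc k) - x k)) \<le> g (Suc k) \<bullet> (x (Suc k) - x k)"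

lemma bfgs_seq_iteration:
  assumes "bfgs_seq f x"
  obtains g \<mu> \<nu> H0 where "bfgs_iteration f x g \<mu> \<nu> H0"
  using assms unfolding bfgs_seq_def bfgs_iteration_def Let_def by blast

context bfgs_iteration
begin

abbreviation s where "s k \<equiv> x (Suc k) - x k"
abbreviation y where "y k \<equiv> g (Suc k) - g k"
abbreviation H where "H \<equiv> bfgs_H x g H0"
abbreviation B where "B \<equiv> bfgs_B x g (matrix_inv H0)"
abbreviation a where "a k \<equiv> B k *v s k"

lemma search_direction_scale:
  assumes "pos_def_mat (H k)"
  obtains t where "t > 0" "H k *v g k = - (t *\<^sub>R s k)"
proof -
  obtain t where t: "t \<ge> 0" "H k *v g k = - (t *\<^sub>R s k)" using search_direction by blast
  have "g k \<bullet> (H k *v g k) > 0" using assms gradient_nonzero by (simp add: pos_def_mat_def)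
  then have "t \<noteq> 0" using t(2) by auto
  with t show ?thesis by (intro that[of t]) auto
qed

lemma descent_and_curvature:
  assumes "pos_def_mat (H k)"
  shows "g k \<bullet> s k < 0" and "(1 - \<nu>) * - (g k \<bullet> s k) \<le> s k \<bullet> y k" and "s k \<bullet> y k > 0"
proof -
  obtain t where "t > 0" "H k *v g k = - (t *\<^sub>R s k)" using search_direction_scale[OF assms] .
  moreover have "g k \<bullet> (H k *v g k) > 0" using assms gradient_nonzero by (simp add: pos_def_mat_def)
  ultimately show descent: "g k \<bullet> s k < 0" by (simp add: mult_less_0_iff)
  show curvature: "(1 - \<nu>) * - (g k \<bullet> s k) \<le> s k \<bullet> y k"
    using wolfe[of k] by (simp add: inner_diff_right inner_commute algebra_simps)
  have "(1 - \<nu>) * - (g k \<bullet> s k) > 0" using descent parameters by (intro mult_pos_pos) auto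
  then show "s k \<bullet> y k > 0" using curvature by linarith
qed

lemma pos_def_H: "pos_def_mat (H k)"
proof (induction k)
  case 0
  then show ?case by (simp add: pos_def_H0)
next
  case (Suc k)
  then show ?case
    unfolding bfgs_H_Suc by (rule pos_def_mat_bfgs_update[OF Suc descent_and_curvature(3)])
qed

lemma descent: "g k \<bullet> s k < 0"
  using descent_and_curvature(1)[OF pos_def_H] .

lemma curvature: "(1 - \<nu>) * - (g k \<bullet> s k) \<le> s k \<bullet> y k"
  using descent_and_curvature(2)[OF pos_def_H] .

lemma curvature_pos: "s k \<bullet> y k > 0"
  using descent_and_curvature(3)[OF pos_def_H] .

lemma B_inverse: "B k ** H k = mat 1"
proof (induction k)
  case 0
  then show ?case by (simp add: pos_def_mat_matrix_inv[OF pos_def_H0])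
next
  case (Suc k)
  then show ?case
    unfolding bfgs_H_Suc bfgs_B.simps by (rule bfgs_dual_update_inverse[OF pos_def_H curvature_pos])
qed

lemma pos_def_B: "pos_def_mat (B k)"
  using pos_def_mat_left_inverse[OF pos_def_H B_inverse] .

lemma trace_B_Suc: "trace (B (Suc k)) = trace (B k) - a k \<bullet> a k / (s k \<bullet> a k) + y k \<bullet> y k / (y k \<bullet> s k)"
  by (simp add: trace_bfgs_dual_update)

lemma det_B_Suc: "det (B (Suc k)) = det (B k) * ((y k \<bullet> s k) / (s k \<bullet> a k))"
  using det_bfgs_dual_update[OF pos_def_H curvature_pos B_inverse] by simp

lemma dual_curvature_pos: "s k \<bullet> a k > 0"
  using bfgs_dual_update_curvature[OF pos_def_H curvature_pos B_inverse] .

lemma decrease: "\<mu> * - (g k \<bullet> s k) \<le> f (x k) - f (x (Suc k))"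
  using armijo[of k] by simp

lemma decrease_pos: "f (x (Suc k)) < f (x k)"
proof -
  have "\<mu> * - (g k \<bullet> s k) > 0" using descent[of k] parameters by (intro mult_pos_pos) auto
  then show ?thesis using decrease[of k] by linarith
qed

lemma sublevel: "f (x k) \<le> f (x 0)"
proof (induction k)
  case (Suc k)
  then show ?case using decrease_pos[of k] by linarith
qed simp

lemma powell_product_bound:
  "(1 - \<nu>) * \<mu> * (norm (g k))\<^sup>2
     \<le> (y k \<bullet> s k) / (s k \<bullet> a k) * (a k \<bullet> a k / (s k \<bullet> a k)) * (f (x k) - f (x (Suc k)))"
proof -
  obtain t where t: "t > 0" "H k *v g k = - (t *\<^sub>R s k)"
    using search_direction_scale[OF pos_def_H] .
  have "g k = B k *v (H k *v g k)" by (simp add: matrix_vector_mul_assoc B_inverse)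
  also have "\<dots> = B k *v ((- t) *\<^sub>R s k)" by (simp add: t(2))
  also have "\<dots> = - (t *\<^sub>R a k)" by (metis matrix_vector_mult_scaleR scaleR_minus_left)
  finally have ga: "g k = - (t *\<^sub>R a k)" .
  define G where "G = - (g k \<bullet> s k)"
  have G: "G > 0" using descent[of k] by (simp add: G_def)
  have sa: "s k \<bullet> a k = G / t" using t(1) by (simp add: G_def ga inner_commute)
  have aa: "a k \<bullet> a k = (norm (g k))\<^sup>2 / t\<^sup>2"
    using t(1) by (simp add: ga power2_eq_square field_simps) (metis dot_square_norm power2_eq_square)
  have "(1 - \<nu>) * G \<le> y k \<bullet> s k" using curvature[of k] by (simp add: G_def inner_commute)
  moreover have "\<mu> * G \<le> f (x k) - f (x (Suc k))" using decrease[of k] by (simp add: G_def)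
  moreover have "0 \<le> \<mu> * G" "0 \<le> y k \<bullet> s k"
    using G parameters curvature_pos[of k] by (auto simp: inner_commute)
  ultimately have prod: "(1 - \<nu>) * G * (\<mu> * G) \<le> (y k \<bullet> s k) * (f (x k) - f (x (Suc k)))"
    by (intro mult_mono)
  have "(1 - \<nu>) * \<mu> * (norm (g k))\<^sup>2 = (1 - \<nu>) * G * (\<mu> * G) * ((norm (g k))\<^sup>2 / G\<^sup>2)"
    using G by (simp add: field_simps power2_eq_square)
  also have "\<dots> \<le> (y k \<bullet> s k) * (f (x k) - f (x (Suc k))) * ((norm (g k))\<^sup>2 / G\<^sup>2)"
    using prod by (rule mult_right_mono) simp
  also have "\<dots> = (y k \<bullet> s k) / (s k \<bullet> a k) * (a k \<bullet> a k / (s k \<bullet> a k)) * (f (x k) - f (x (Suc k)))"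
    using t(1) G by (simp add: sa aa field_simps power2_eq_square)
  finally show ?thesis .
qed

theorem gradient_small_infinitely_often:
  assumes curvature_bound: "\<And>k. (norm (y k))\<^sup>2 \<le> M * (y k \<bullet> s k)"
    and bounded_below: "\<And>k. lb \<le> f (x k)" and "e > 0"
  shows "\<exists>j\<ge>K. norm (g j) < e"
proof (rule ccontr)
  assume "\<not> (\<exists>j\<ge>K. norm (g j) < e)"
  then have large: "e \<le> norm (g (j + K))" for j by (simp add: not_less)
  have ys: "y k \<bullet> s k > 0" for k using curvature_pos[of k] by (simp add: inner_commute)
  have a: "a k \<bullet> a k > 0" for k using dual_curvature_pos[of k] by auto
  show False
  proof (rule powell_potential_contradiction
      [where q = "\<lambda>j. a (j + K) \<bullet> a (j + K) / (s (j + K) \<bullet> a (j + K))"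
        and d = "\<lambda>j. f (x (j + K)) - f (x (Suc (j + K)))"
        and \<rho> = "\<lambda>j. (y (j + K) \<bullet> s (j + K)) / (s (j + K) \<bullet> a (j + K))"
        and c = "(1 - \<nu>) * \<mu> * e\<^sup>2" and T = "\<lambda>j. trace (B (j + K))"
        and r = "\<lambda>j. y (j + K) \<bullet> y (j + K) / (y (j + K) \<bullet> s (j + K))" and M = M
        and \<Delta> = "\<lambda>j. det (B (j + K))" and N = "real (card {p. p permutes (UNIV::'n set)})"
        and n = "CARD('n)" and D = "f (x K) - lb"])
    fix j
    have "e\<^sup>2 \<le> (norm (g (j + K)))\<^sup>2" using large[of j] \<open>e > 0\<close> by (intro power_mono) auto
    then have "(1 - \<nu>) * \<mu> * e\<^sup>2 \<le> (1 - \<nu>) * \<mu> * (norm (g (j + K)))\<^sup>2"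
      using parameters by (intro mult_left_mono) auto
    then show "(1 - \<nu>) * \<mu> * e\<^sup>2 \<le> (y (j + K) \<bullet> s (j + K)) / (s (j + K) \<bullet> a (j + K))
        * (a (j + K) \<bullet> a (j + K) / (s (j + K) \<bullet> a (j + K))) * (f (x (j + K)) - f (x (Suc (j + K))))"
      using powell_product_bound[of "j + K"] by linarith
    show "y (j + K) \<bullet> y (j + K) / (y (j + K) \<bullet> s (j + K)) \<le> M"
      using curvature_bound[of "j + K"] ys[of "j + K"] by (simp add: power2_norm_eq_inner divide_le_eq)
    show "\<bar>det (B (j + K))\<bar> \<le> real (card {p. p permutes (UNIV::'n set)}) * trace (B (j + K)) ^ CARD('n)"
      using pos_def_mat_det_bound[OF pos_def_B] .
  next
    fix m
    have "(\<Sum>j<m. f (x (j + K)) - f (x (Suc (j + K)))) = f (x K) - f (x (m + K))"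
      by (induction m) simp_all
    then show "(\<Sum>j<m. f (x (j + K)) - f (x (Suc (j + K)))) \<le> f (x K) - lb"
      using bounded_below[of "m + K"] by simp
  next
    have "det (B K) * det (H K) = 1" using det_mul[of "B K" "H K"] B_inverse[of K] by simp
    then show "det (B (0 + K)) \<noteq> 0" by auto
  qed (use \<open>e > 0\<close> parameters decrease_pos dual_curvature_pos ys a trace_B_Suc det_B_Suc
      pos_def_mat_trace_pos[OF pos_def_B] in \<open>auto simp: inner_commute\<close>)
qed

theorem function_values_tendsto_Inf:
  assumes U: "convex_on U f" "\<And>k. x k \<in> U" and bounded: "bounded {z \<in> U. f z \<le> f (x 0)}"
    and curvature_bound: "\<And>k. (norm (y k))\<^sup>2 \<le> M * (y k \<bullet> s k)"
  shows "(\<lambda>k. f (x k)) \<longlonglongrightarrow> Inf (f ` U)"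
proof -
  obtain R where R: "\<And>z. z \<in> U \<Longrightarrow> f z \<le> f (x 0) \<Longrightarrow> norm z \<le> R"
    using bounded unfolding bounded_iff by blast
  have R0: "R \<ge> 0" using R[OF U(2) sublevel, of 0] by (meson norm_ge_zero order_trans)
  have gap: "f (x k) - norm (g k) * (2 * R) \<le> f z" if "z \<in> U" for z k
  proof (cases "f z \<le> f (x 0)")
    case True
    have "norm (z - x k) \<le> 2 * R"
      using norm_triangle_ineq4[of z "x k"] R[OF that True] R[OF U(2) sublevel[of k]] by linarith
    then show ?thesis
      using convex_on_gap_le_gradient[OF U(1) U(2) that gradient, of k]
        mult_left_mono[of "norm (z - x k)" "2 * R" "norm (g k)"] by simp
  next
    case False
    then show ?thesis using sublevel[of k] R0 by (smt (verit) mult_nonneg_nonneg norm_ge_zero)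
  qed
  have bdd: "bdd_below (f ` U)" by (rule bdd_belowI2[OF gap[of _ 0]])
  have below: "Inf (f ` U) \<le> f (x k)" for k using cInf_lower[OF imageI[OF U(2)] bdd] .
  have above: "f (x k) - norm (g k) * (2 * R) \<le> Inf (f ` U)" for k
    using U(2) by (intro cINF_greatest gap) auto
  have "decseq (\<lambda>k. f (x k))" by (rule decseq_SucI) (rule less_imp_le[OF decrease_pos])
  then have dec: "f (x n) \<le> f (x j)" if "j \<le> n" for j n using that by (rule decseqD)
  show ?thesis
  proof (rule LIMSEQ_I)
    fix e :: real assume "e > 0"
    then obtain j where "norm (g j) < e / (2 * R + 1)"
      using gradient_small_infinitely_often[OF curvature_bound gap[OF U(2)], of "e / (2 * R + 1)" 0] R0
      by auto
    then have "norm (g j) * (2 * R) < e"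
      using R0 \<open>e > 0\<close> by (simp add: field_simps) (smt (verit) mult_left_mono norm_ge_zero)
    then have "\<forall>n\<ge>j. norm (f (x n) - Inf (f ` U)) < e"
      using below above[of j] dec by (smt (verit) real_norm_def)
    then show "\<exists>j. \<forall>n\<ge>j. norm (f (x n) - Inf (f ` U)) < e" by blast
  qed
qed

lemma curvature_bounded_by_smooth_model:
  assumes "open W" "convex W" "C2_on W F" "convex_on W F" "compact A" "A \<subseteq> W"
    and "\<And>k. x k \<in> A" and "\<And>k. (F has_derivative (\<lambda>h. g k \<bullet> h)) (at (x k))"
  obtains M where "\<And>k. (norm (y k))\<^sup>2 \<le> M * (y k \<bullet> s k)"
proof -
  obtain M where "\<And>p q gp gq. p \<in> A \<Longrightarrow> q \<in> A \<Longrightarrow> (F has_derivative (\<lambda>h. gp \<bullet> h)) (at p) \<Longrightarrow>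
      (F has_derivative (\<lambda>h. gq \<bullet> h)) (at q) \<Longrightarrow> (norm (gq - gp))\<^sup>2 \<le> M * ((gq - gp) \<bullet> (q - p))"
    using C2_convex_cocoercive_on_compact[OF assms(1-6)] by blast
  then show ?thesis using that assms(7,8) by blast
qed

lemma closure_iterates_sublevel:
  assumes "continuous_on U f" "closure (range x) \<subseteq> U"
  shows "closure (range x) \<subseteq> {z \<in> U. f z \<le> f (x 0)}"
proof -
  have "f ` closure (range x) \<subseteq> {..f (x 0)}"
    by (rule image_closure_subset[OF continuous_on_subset[OF assms] closed_atMost])
      (use sublevel in auto)
  then show ?thesis using assms(2) by auto
qed

end

theorem theorem4p3:
  fixes U V :: "(real^'n) set" and f :: "real^'n \<Rightarrow> real" and x :: "nat \<Rightarrow> real^'n"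
  assumes "open U" and "convex U" and "convex_on U f"
    and "bfgs_seq f x" and "\<forall>k. x k \<in> U"
    and "bounded {z \<in> U. f z \<le> f (x 0)}"
    and "open V" and "V \<subseteq> U" and "closure (range x) \<subseteq> V"
    and "Inf (f ` V) = Inf (f ` U)"
    and "\<forall>\<delta>>0. \<exists>U\<delta> (f\<delta> :: real^'n \<Rightarrow> real).
           convex U\<delta> \<and> open U\<delta> \<and> U\<delta> \<subseteq> U \<and> {z \<in> U. f z \<le> f (x 0)} \<subseteq> U\<delta> \<and>
           C2_on U\<delta> f\<delta> \<and> convex_on U\<delta> f\<delta> \<and>
           (\<forall>z\<in>U\<delta>. (- V = {} \<or> infdist z (- V) > \<delta>) \<longrightarrow> f\<delta> z = f z)"
  shows "(\<lambda>k. f (x k)) \<longlonglongrightarrow> Inf (f ` U)"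
proof -
  obtain g \<mu> \<nu> H0 where "bfgs_iteration f x g \<mu> \<nu> H0" using bfgs_seq_iteration[OF assms(4)] .
  then interpret bfgs_iteration f x g \<mu> \<nu> H0 .
  define A where "A = closure (range x)"
  have A_sublevel: "A \<subseteq> {z \<in> U. f z \<le> f (x 0)}"
    unfolding A_def using convex_on_continuous[OF assms(1,3)] assms(8,9)
    by (intro closure_iterates_sublevel) auto
  have "compact A"
    unfolding A_def compact_closure by (rule bounded_subset[OF assms(6)]) (use assms(5) sublevel in auto)
  then obtain \<delta> where "\<delta> > 0" and \<delta>: "\<And>z. z \<in> A \<Longrightarrow> - V = {} \<or> \<delta> < infdist z (- V)"
    using compact_subset_open_infdist_gt[OF _ assms(7) assms(9)[folded A_def]] by blast
  obtain U\<delta> f\<delta> where U\<delta>: "convex U\<delta>" "open U\<delta>" "{z \<in> U. f z \<le> f (x 0)} \<subseteq> U\<delta>"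
    and f\<delta>: "C2_on U\<delta> f\<delta>" "convex_on U\<delta> f\<delta>"
    and agree: "\<forall>z\<in>U\<delta>. (- V = {} \<or> infdist z (- V) > \<delta>) \<longrightarrow> f\<delta> z = f z"
    using assms(11)[rule_format, OF \<open>\<delta> > 0\<close>] by blast
  define W where "W = U\<delta> \<inter> {z. - V = {} \<or> \<delta> < infdist z (- V)}"
  have "open W"
    unfolding W_def by (cases "- V = {}") (auto intro!: open_Int U\<delta>(2) open_Collect_less continuous_intros)
  have xA: "x k \<in> A" for k unfolding A_def by (auto intro: closure_subset[THEN subsetD])
  then have xW: "x k \<in> W" for k
    using \<delta>[OF xA] subsetD[OF U\<delta>(3) subsetD[OF A_sublevel xA]] by (simp add: W_def)
  have f\<delta>_gradient: "(f\<delta> has_derivative (\<lambda>h. g k \<bullet> h)) (at (x k))" for k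
    by (rule has_derivative_transform_within_open[OF gradient \<open>open W\<close> xW]) (use agree in \<open>auto simp: W_def\<close>)
  obtain M where "\<And>k. (norm (y k))\<^sup>2 \<le> M * (y k \<bullet> s k)"
    using curvature_bounded_by_smooth_model[OF U\<delta>(2,1) f\<delta> \<open>compact A\<close> _ xA f\<delta>_gradient]
      A_sublevel U\<delta>(3) by blast
  then show ?thesis using function_values_tendsto_Inf assms(3,5,6) by blast
qed

end
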